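(* Let $\theta$ be an ordered partial action of a groupoid $\mathcal{G}$ on a semilatticeoid $X$. Then the semidirect product $\mathcal{G}\ltimes_\theta X$ is an $E$-unitary inverse semigroupoid.
   Context: Inverse semigroupoid: arrows $\mathcal{S}$, objects $\mathcal{S}^{(0)}$, maps $d,c$, associative multiplication on $\mathcal{S}^{(2)}=\{(s,t):d(s)=c(t)\}$ with $d(st)=d(t)$, $c(st)=c(s)$, unique $s^*$ with $ss^*s=s$, $s^*ss^*=s^*$; natural order on parallel arrows $s\leqslant t$ iff $s=te$ for an idempotent $e$; $(s,t)\in\sigma$ iff some $r\leqslant s,t$; $E$-unitary: $(s,e)\in\sigma$, $e$ idempotent imply $s$ idempotent. A groupoid is an inverse semigroupoid with exactly one idempotent over each object. A semilatticeoid is an inverse semigroupoid all of whose elements are idempotent, with its natural order. A partial action of $\mathcal{G}$ on $X$ is a pair $(\{X_g\},\{\theta_g\})$, $X_g\subseteq X$, $\theta_g:X_{g^{*}}\to X_g$ bijections with $\theta_g^{-1}=\theta_{g^*}$, $X=\bigcup X_g$, $\theta_g\circ\theta_h\subseteq\theta_{gh}$ for composable $(g,h)$, $X_g\subseteq X_h$ if $g\leqslant h$; ordered if each $X_g$ is an order ideal and each $\theta_g$ an order isomorphism; assume $X_g\ne\emptyset$. Semidirect product: $\mathcal{G}\ltimes_\theta X=\{(g,x): x\in X_{g^*}\}$ with objects $\mathcal{G}^{(0)}\times X^{(0)}$, $d(g,x)=(d(g),d(x))$, $c(g,x)=(c(g),c(\theta_g(x)))$, product $(g,x)(h,y)=(gh,\theta_{h^*}(x\theta_h(y)))$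 defined when $(g,h)$ composable and $(x,\theta_h(y))\in X^{(2)}$. *)

theory Defs
  imports Main
begin

record ('a, 'o) sgd =
  arr  :: "'a set"
  obj  :: "'o set"
  sdom :: "'a \<Rightarrow> 'o"
  scod :: "'a \<Rightarrow> 'o"
  smul :: "'a \<Rightarrow> 'a \<Rightarrow> 'a"

definition composable :: "('a, 'o) sgd \<Rightarrow> 'a \<Rightarrow> 'a \<Rightarrow> bool" where
  "composable S s t \<longleftrightarrow> s \<in> arr S \<and> t \<in> arr S \<and> sdom S s = scod S t"

definition semigroupoid :: "('a, 'o) sgd \<Rightarrow> bool" where
  "semigroupoid S \<longleftrightarrow>
     (\<forall>s\<in>arr S. sdom S s \<in> obj S \<and> scod S s \<in> obj S) \<and>
     (\<forall>s t. composable S s t \<longrightarrow>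
        smul S s t \<in> arr S \<and> sdom S (smul S s t) = sdom S t \<and> scod S (smul S s t) = scod S s) \<and>
     (\<forall>s t u. composable S s t \<and> composable S t u \<longrightarrow>
        smul S (smul S s t) u = smul S s (smul S t u))"

definition is_inv :: "('a, 'o) sgd \<Rightarrow> 'a \<Rightarrow> 'a \<Rightarrow> bool" where
  "is_inv S s t \<longleftrightarrow> t \<in> arr S \<and> sdom S s = scod S t \<and> sdom S t = scod S s \<and>
     smul S (smul S s t) s = s \<and> smul S (smul S t s) t = t"

definition inverse_semigroupoid :: "('a, 'o) sgd \<Rightarrow> bool" where
  "inverse_semigroupoid S \<longleftrightarrow> semigroupoid S \<and> (\<forall>s\<in>arr S. \<exists>!t. is_inv S s t)"

definition sinv :: "('a, 'o) sgd \<Rightarrow> 'a \<Rightarrow> 'a" where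
  "sinv S s = (THE t. is_inv S s t)"

definition idem :: "('a, 'o) sgd \<Rightarrow> 'a \<Rightarrow> bool" where
  "idem S e \<longleftrightarrow> e \<in> arr S \<and> sdom S e = scod S e \<and> smul S e e = e"

definition nat_le :: "('a, 'o) sgd \<Rightarrow> 'a \<Rightarrow> 'a \<Rightarrow> bool" where
  "nat_le S s t \<longleftrightarrow> s \<in> arr S \<and> t \<in> arr S \<and> sdom S s = sdom S t \<and> scod S s = scod S t \<and>
     (\<exists>e. idem S e \<and> composable S t e \<and> s = smul S t e)"

definition sigma_rel :: "('a, 'o) sgd \<Rightarrow> 'a \<Rightarrow> 'a \<Rightarrow> bool" where
  "sigma_rel S s t \<longleftrightarrow> (\<exists>r. nat_le S r s \<and> nat_le S r t)"

definition E_unitary :: "('a, 'o) sgd \<Rightarrow> bool" where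
  "E_unitary S \<longleftrightarrow> (\<forall>s e. s \<in> arr S \<and> idem S e \<and> sigma_rel S s e \<longrightarrow> idem S s)"

definition groupoid :: "('a, 'o) sgd \<Rightarrow> bool" where
  "groupoid S \<longleftrightarrow> inverse_semigroupoid S \<and> (\<forall>x\<in>obj S. \<exists>!e. idem S e \<and> sdom S e = x)"

definition semilatticeoid :: "('a, 'o) sgd \<Rightarrow> bool" where
  "semilatticeoid S \<longleftrightarrow> inverse_semigroupoid S \<and> (\<forall>s\<in>arr S. idem S s)"

text \<open>Partial action (Xd, th) of G on X: Xd g is the domain X_g, th g is theta_g.\<close>
definition partial_action ::
  "('g, 'go) sgd \<Rightarrow> ('x, 'xo) sgd \<Rightarrow> ('g \<Rightarrow> 'x set) \<Rightarrow> ('g \<Rightarrow> 'x \<Rightarrow> 'x) \<Rightarrow> bool" where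
  "partial_action G X Xd th \<longleftrightarrow>
     (\<forall>g\<in>arr G. Xd g \<subseteq> arr X \<and> Xd g \<noteq> {}) \<and>
     (\<forall>g\<in>arr G. bij_betw (th g) (Xd (sinv G g)) (Xd g)) \<and>
     (\<forall>g\<in>arr G. \<forall>y\<in>Xd g. th (sinv G g) y = inv_into (Xd (sinv G g)) (th g) y) \<and>
     arr X = (\<Union>g\<in>arr G. Xd g) \<and>
     (\<forall>g h. composable G g h \<longrightarrow>
        (\<forall>x\<in>Xd (sinv G h). th h x \<in> Xd (sinv G g) \<longrightarrow>
           x \<in> Xd (sinv G (smul G g h)) \<and> th (smul G g h) x = th g (th h x))) \<and>
     (\<forall>g h. nat_le G g h \<longrightarrow> Xd g \<subseteq> Xd h)"

definition order_ideal :: "('x, 'xo) sgd \<Rightarrow> 'x set \<Rightarrow> bool" where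
  "order_ideal X Y \<longleftrightarrow> Y \<subseteq> arr X \<and> (\<forall>y\<in>Y. \<forall>x. nat_le X x y \<longrightarrow> x \<in> Y)"

definition ordered_partial_action ::
  "('g, 'go) sgd \<Rightarrow> ('x, 'xo) sgd \<Rightarrow> ('g \<Rightarrow> 'x set) \<Rightarrow> ('g \<Rightarrow> 'x \<Rightarrow> 'x) \<Rightarrow> bool" where
  "ordered_partial_action G X Xd th \<longleftrightarrow> partial_action G X Xd th \<and>
     (\<forall>g\<in>arr G. order_ideal X (Xd g) \<and>
        (\<forall>x\<in>Xd (sinv G g). \<forall>y\<in>Xd (sinv G g). nat_le X x y \<longleftrightarrow> nat_le X (th g x) (th g y)))"

definition semidirect ::
  "('g, 'go) sgd \<Rightarrow> ('x, 'xo) sgd \<Rightarrow> ('g \<Rightarrow> 'x set) \<Rightarrow> ('g \<Rightarrow> 'x \<Rightarrow> 'x) \<Rightarrow> ('g \<times> 'x, 'go \<times> 'xo) sgd" where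
  "semidirect G X Xd th =
     \<lparr> arr = {(g, x). g \<in> arr G \<and> x \<in> Xd (sinv G g)},
       obj = obj G \<times> obj X,
       sdom = (\<lambda>(g, x). (sdom G g, sdom X x)),
       scod = (\<lambda>(g, x). (scod G g, scod X (th g x))),
       smul = (\<lambda>(g, x) (h, y). (smul G g h, th (sinv G h) (smul X x (th h y)))) \<rparr>"

end

theory Submission
  imports Defs
begin

text \<open>
  Idempotents of a groupoid are identities, so an arrow \<open>(g, x)\<close> of the semidirect product is
  idempotent exactly when \<open>g\<close> is, and the natural order never changes the first component;
  together these give E-unitarity.  In a semilatticeoid the product of two parallel arrows is their
  meet for the natural order, so every \<open>\<theta>\<^sub>g\<close>, being an order isomorphism between order
  ideals, preserves products.  This turns associativity into a computation with meets, makes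
  \<open>(g\<^sup>*, \<theta>\<^sub>g x)\<close> an inverse of \<open>(g, x)\<close>, and shows that any inverse
  \<open>(g\<^sup>*, y)\<close> satisfies both \<open>\<theta>\<^sub>g x \<le> y\<close> and \<open>y \<le> \<theta>\<^sub>g x\<close>.
\<close>

lemma semigroupoid_smul:
  assumes "semigroupoid S" "composable S s t"
  shows "smul S s t \<in> arr S" "sdom S (smul S s t) = sdom S t" "scod S (smul S s t) = scod S s"
  using assms unfolding semigroupoid_def by blast+

lemma semigroupoid_assoc:
  assumes "semigroupoid S" "composable S s t" "composable S t u"
  shows "smul S (smul S s t) u = smul S s (smul S t u)"
  using assms unfolding semigroupoid_def by blast

lemma semigroupoid_obj:
  assumes "semigroupoid S" "s \<in> arr S"
  shows "sdom S s \<in> obj S" "scod S s \<in> obj S"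
  using assms unfolding semigroupoid_def by blast+

lemma is_inv_sym: "is_inv S s t \<Longrightarrow> s \<in> arr S \<Longrightarrow> is_inv S t s"
  unfolding is_inv_def by auto

lemma is_inv_sinv:
  assumes "inverse_semigroupoid S" "s \<in> arr S"
  shows "is_inv S s (sinv S s)"
  using assms unfolding inverse_semigroupoid_def sinv_def by (metis theI')

lemma sinv_unique:
  assumes "inverse_semigroupoid S" "s \<in> arr S" "is_inv S s t"
  shows "sinv S s = t"
  using assms unfolding inverse_semigroupoid_def sinv_def by (metis the1_equality)

lemma sinv_sinv:
  assumes "inverse_semigroupoid S" "s \<in> arr S"
  shows "sinv S (sinv S s) = s"
  using assms by (metis is_inv_def is_inv_sinv is_inv_sym sinv_unique)

locale is_groupoid =
  fixes G :: "('g, 'go) sgd"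
  assumes groupoid: "groupoid G"
begin

lemma inverse_semigroupoid: "inverse_semigroupoid G"
  using groupoid unfolding groupoid_def by blast

lemma semigroupoid: "semigroupoid G"
  using inverse_semigroupoid unfolding inverse_semigroupoid_def by blast

lemma smul_simps [simp]:
  assumes "g \<in> arr G" "h \<in> arr G" "sdom G g = scod G h"
  shows "smul G g h \<in> arr G" "sdom G (smul G g h) = sdom G h" "scod G (smul G g h) = scod G g"
  using semigroupoid_smul[OF semigroupoid] assms unfolding composable_def by auto

lemma smul_assoc [simp]:
  assumes "g \<in> arr G" "h \<in> arr G" "k \<in> arr G" "sdom G g = scod G h" "sdom G h = scod G k"
  shows "smul G (smul G g h) k = smul G g (smul G h k)"
  using semigroupoid_assoc[OF semigroupoid] assms unfolding composable_def by auto

lemma sinv_simps [simp]: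
  assumes "g \<in> arr G"
  shows "sinv G g \<in> arr G" "sdom G (sinv G g) = scod G g" "scod G (sinv G g) = sdom G g"
    "smul G g (smul G (sinv G g) g) = g" "smul G (sinv G g) (smul G g (sinv G g)) = sinv G g"
    "sinv G (sinv G g) = g"
  using is_inv_sinv[OF inverse_semigroupoid assms] sinv_sinv[OF inverse_semigroupoid assms]
    smul_assoc[of g "sinv G g" g] smul_assoc[of "sinv G g" g "sinv G g"] assms
  unfolding is_inv_def by auto

lemma idem_sinv_smul:
  assumes "g \<in> arr G"
  shows "idem G (smul G (sinv G g) g)"
  using assms unfolding idem_def by simp

lemma idem_unique:
  assumes "idem G e" "idem G f" "sdom G e = sdom G f"
  shows "e = f"
proof -
  have "sdom G e \<in> obj G"
    using assms(1) semigroupoid_obj(1)[OF semigroupoid] unfolding idem_def by blast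
  then show ?thesis
    using groupoid assms unfolding groupoid_def by metis
qed

lemma smul_idem_right:
  assumes "g \<in> arr G" "idem G e" "sdom G g = scod G e"
  shows "smul G g e = g"
proof -
  have "e = smul G (sinv G g) g"
    using idem_unique[OF assms(2) idem_sinv_smul] assms unfolding idem_def by simp
  then show ?thesis using assms(1) by simp
qed

lemma smul_idem_left:
  assumes "g \<in> arr G" "idem G e" "sdom G e = scod G g"
  shows "smul G e g = g"
proof -
  have "e = smul G g (sinv G g)"
    using idem_unique[OF assms(2) idem_sinv_smul[of "sinv G g"]] assms unfolding idem_def by simp
  then show ?thesis using assms(1) by simp
qed

lemma sinv_eqI:
  assumes "g \<in> arr G" "h \<in> arr G" "sdom G g = scod G h" "idem G (smul G g h)"
  shows "sinv G g = h"
proof -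
  have "h = smul G (smul G (sinv G g) g) h"
    using smul_idem_left idem_sinv_smul assms by simp
  also have "\<dots> = sinv G g"
    using smul_idem_right[of "sinv G g" "smul G g h"] assms unfolding idem_def by simp
  finally show ?thesis by simp
qed

lemma sinv_idem: "idem G e \<Longrightarrow> sinv G e = e"
  using sinv_eqI unfolding idem_def by auto

lemma sinv_smul:
  assumes "g \<in> arr G" "h \<in> arr G" "sdom G g = scod G h"
  shows "sinv G (smul G g h) = smul G (sinv G h) (sinv G g)"
proof (rule sinv_eqI)
  have "smul G (smul G g h) (smul G (sinv G h) (sinv G g)) = smul G g (sinv G g)"
    using assms smul_idem_left[of "sinv G g" "smul G h (sinv G h)"] idem_sinv_smul[of "sinv G h"]
    by simp
  then show "idem G (smul G (smul G g h) (smul G (sinv G h) (sinv G g)))"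
    using idem_sinv_smul[of "sinv G g"] assms by simp
qed (use assms in simp_all)

end

locale is_semilatticeoid =
  fixes X :: "('x, 'xo) sgd"
  assumes semilatticeoid: "semilatticeoid X"
begin

lemma inverse_semigroupoid: "inverse_semigroupoid X"
  using semilatticeoid unfolding semilatticeoid_def by blast

lemma semigroupoid: "semigroupoid X"
  using inverse_semigroupoid unfolding inverse_semigroupoid_def by blast

lemma arr_idem: "x \<in> arr X \<Longrightarrow> idem X x"
  using semilatticeoid unfolding semilatticeoid_def by blast

lemma arr_simps [simp]:
  assumes "x \<in> arr X"
  shows "scod X x = sdom X x" "smul X x x = x"
  using arr_idem[OF assms] unfolding idem_def by auto

lemma smul_simps [simp]:
  assumes "x \<in> arr X" "y \<in> arr X" "sdom X x = sdom X y"
  shows "smul X x y \<in> arr X" "sdom X (smul X x y) = sdom X x"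
  using semigroupoid_smul[of X x y] inverse_semigroupoid assms
  unfolding inverse_semigroupoid_def composable_def by auto

lemma smul_assoc [simp]:
  assumes "x \<in> arr X" "y \<in> arr X" "z \<in> arr X" "sdom X x = sdom X y" "sdom X y = sdom X z"
  shows "smul X (smul X x y) z = smul X x (smul X y z)"
  using semigroupoid_assoc[of X x y z] inverse_semigroupoid assms
  unfolding inverse_semigroupoid_def composable_def by auto

lemma smul_left_absorb [simp]:
  assumes "x \<in> arr X" "y \<in> arr X" "sdom X x = sdom X y"
  shows "smul X x (smul X x y) = smul X x y"
proof -
  have "smul X x (smul X x y) = smul X (smul X x x) y"
    by (rule smul_assoc[symmetric]) (use assms in simp_all)
  then show ?thesis
    using assms by simp
qed

text \<open>Both products are inverses of the idempotent arrow \<open>smul X x y\<close>.\<close>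

lemma smul_comm:
  assumes "x \<in> arr X" "y \<in> arr X" "sdom X x = sdom X y"
  shows "smul X x y = smul X y x"
proof -
  have absorb: "smul X u (smul X v (smul X u v)) = smul X u v"
    if "u \<in> arr X" "v \<in> arr X" "sdom X u = sdom X v" for u v
  proof -
    have "smul X u (smul X v (smul X u v)) = smul X (smul X u v) (smul X u v)"
      by (rule smul_assoc[symmetric]) (use that in simp_all)
    also have "\<dots> = smul X u v"
      by (rule arr_simps(2)) (use that in simp)
    finally show ?thesis .
  qed
  have "is_inv X (smul X x y) (smul X y x)"
    using assms absorb[of x y] absorb[of y x] unfolding is_inv_def by simp
  moreover have "is_inv X (smul X x y) (smul X x y)"
    using assms unfolding is_inv_def by simp
  ultimately show ?thesis
    using sinv_unique[OF inverse_semigroupoid] assms by (metis smul_simps(1))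
qed

lemma nat_le_iff:
  "nat_le X x y \<longleftrightarrow> x \<in> arr X \<and> y \<in> arr X \<and> sdom X x = sdom X y \<and> smul X x y = x"
proof
  assume "nat_le X x y"
  then obtain e where e: "x \<in> arr X" "y \<in> arr X" "sdom X x = sdom X y" "e \<in> arr X"
      "sdom X y = sdom X e" and x: "x = smul X y e"
    unfolding nat_le_def composable_def by auto
  have "smul X x y = smul X y (smul X e y)"
    unfolding x using e by simp
  also have "\<dots> = x"
    unfolding x using e smul_comm[of e y] by simp
  finally show "x \<in> arr X \<and> y \<in> arr X \<and> sdom X x = sdom X y \<and> smul X x y = x"
    using e by simp
next
  assume x: "x \<in> arr X \<and> y \<in> arr X \<and> sdom X x = sdom X y \<and> smul X x y = x"
  then have "x = smul X y x"
    using smul_comm[of x y] by simp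
  with x show "nat_le X x y"
    unfolding nat_le_def composable_def using arr_idem by (intro conjI exI[of _ x]) auto
qed

lemma nat_le_sdom: "nat_le X x y \<Longrightarrow> sdom X x = sdom X y"
  by (simp add: nat_le_iff)

lemma nat_le_antisym: "nat_le X x y \<Longrightarrow> nat_le X y x \<Longrightarrow> x = y"
  unfolding nat_le_iff using smul_comm by metis

lemma nat_le_trans: "nat_le X x y \<Longrightarrow> nat_le X y z \<Longrightarrow> nat_le X x z"
  unfolding nat_le_iff by (metis smul_assoc)

lemma nat_le_smul:
  assumes "x \<in> arr X" "y \<in> arr X" "sdom X x = sdom X y"
  shows "nat_le X (smul X x y) x" "nat_le X (smul X x y) y"
proof -
  have "smul X (smul X x y) x = smul X x (smul X x y)"
    by (rule smul_comm) (use assms in simp_all)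
  then show "nat_le X (smul X x y) x"
    using assms by (simp add: nat_le_iff)
  show "nat_le X (smul X x y) y"
    using assms by (simp add: nat_le_iff)
qed

lemma nat_le_smul_iff:
  assumes "x \<in> arr X" "y \<in> arr X" "sdom X x = sdom X y"
  shows "nat_le X z (smul X x y) \<longleftrightarrow> nat_le X z x \<and> nat_le X z y"
proof
  assume "nat_le X z (smul X x y)"
  then show "nat_le X z x \<and> nat_le X z y"
    using nat_le_trans nat_le_smul[OF assms] by blast
next
  assume "nat_le X z x \<and> nat_le X z y"
  then have "z \<in> arr X" "sdom X z = sdom X x" "smul X z x = z" "smul X z y = z"
    by (auto simp: nat_le_iff)
  moreover have "smul X z (smul X x y) = smul X (smul X z x) y"
    by (rule smul_assoc[symmetric]) (use assms calculation in simp_all)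
  ultimately show "nat_le X z (smul X x y)"
    using assms by (simp add: nat_le_iff)
qed

lemma order_iso_smul:
  assumes ideals: "order_ideal X A" "order_ideal X B"
    and maps: "\<forall>a\<in>A. f a \<in> B" "\<forall>b\<in>B. f' b \<in> A"
    and inverse: "\<forall>a\<in>A. f' (f a) = a" "\<forall>b\<in>B. f (f' b) = b"
    and iso: "\<forall>a\<in>A. \<forall>a'\<in>A. nat_le X a a' \<longleftrightarrow> nat_le X (f a) (f a')"
    and xy: "x \<in> A" "y \<in> A" "sdom X x = sdom X y"
  shows "sdom X (f x) = sdom X (f y)" "f (smul X x y) = smul X (f x) (f y)"
proof -
  have iso': "nat_le X b b' \<longleftrightarrow> nat_le X (f' b) (f' b')" if "b \<in> B" "b' \<in> B" for b b'
    using iso maps inverse that by metis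
  have arr: "x \<in> arr X" "y \<in> arr X" "f x \<in> arr X" "f y \<in> arr X"
    using ideals maps xy unfolding order_ideal_def by auto
  have m: "smul X x y \<in> A" "nat_le X (smul X x y) x" "nat_le X (smul X x y) y"
    using ideals(1) nat_le_smul[OF arr(1,2) xy(3)] xy unfolding order_ideal_def by auto
  then have fm: "nat_le X (f (smul X x y)) (f x)" "nat_le X (f (smul X x y)) (f y)"
    using iso xy by auto
  then show dom: "sdom X (f x) = sdom X (f y)"
    using nat_le_sdom by metis
  let ?p = "smul X (f x) (f y)"
  have p: "?p \<in> B" "nat_le X ?p (f x)" "nat_le X ?p (f y)"
    using ideals(2) nat_le_smul[OF arr(3,4) dom] maps xy unfolding order_ideal_def by auto
  have "nat_le X (f' ?p) x" "nat_le X (f' ?p) y"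
    using iso'[OF p(1)] p(2,3) maps inverse xy by auto
  then have "nat_le X (f' ?p) (smul X x y)"
    using nat_le_smul_iff[OF arr(1,2) xy(3)] by blast
  then have "nat_le X ?p (f (smul X x y))"
    using iso'[OF p(1)] maps inverse m(1) by metis
  moreover have "nat_le X (f (smul X x y)) ?p"
    using fm nat_le_smul_iff[OF arr(3,4) dom] by blast
  ultimately show "f (smul X x y) = ?p"
    using nat_le_antisym by blast
qed

end

locale ordered_action = G: is_groupoid G + X: is_semilatticeoid X
  for G :: "('g, 'go) sgd" and X :: "('x, 'xo) sgd" +
  fixes Xd :: "'g \<Rightarrow> 'x set" and th :: "'g \<Rightarrow> 'x \<Rightarrow> 'x"
  assumes ordered_partial_action: "ordered_partial_action G X Xd th"
begin

lemma partial_action: "partial_action G X Xd th"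
  using ordered_partial_action unfolding ordered_partial_action_def by blast

lemma Xd_order_ideal: "g \<in> arr G \<Longrightarrow> order_ideal X (Xd g)"
  using ordered_partial_action unfolding ordered_partial_action_def by blast

lemma Xd_arr: "g \<in> arr G \<Longrightarrow> x \<in> Xd g \<Longrightarrow> x \<in> arr X"
  using Xd_order_ideal unfolding order_ideal_def by blast

lemma Xd_downward_closed: "g \<in> arr G \<Longrightarrow> y \<in> Xd g \<Longrightarrow> nat_le X x y \<Longrightarrow> x \<in> Xd g"
  using Xd_order_ideal unfolding order_ideal_def by blast

lemma th_in: "g \<in> arr G \<Longrightarrow> x \<in> Xd (sinv G g) \<Longrightarrow> th g x \<in> Xd g"
  using partial_action bij_betwE unfolding partial_action_def by metis

lemma th_sinv_th:
  assumes "g \<in> arr G" "x \<in> Xd (sinv G g)"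
  shows "th (sinv G g) (th g x) = x"
proof -
  have "th (sinv G g) (th g x) = inv_into (Xd (sinv G g)) (th g) (th g x)"
    using partial_action th_in assms unfolding partial_action_def by blast
  also have "\<dots> = x"
    using partial_action assms unfolding partial_action_def bij_betw_def by simp
  finally show ?thesis .
qed

lemma th_sinv_in: "g \<in> arr G \<Longrightarrow> y \<in> Xd g \<Longrightarrow> th (sinv G g) y \<in> Xd (sinv G g)"
  using th_in[of "sinv G g" y] by simp

lemma th_th_sinv: "g \<in> arr G \<Longrightarrow> y \<in> Xd g \<Longrightarrow> th g (th (sinv G g) y) = y"
  using th_sinv_th[of "sinv G g" y] by simp

lemma th_nat_le_iff:
  "g \<in> arr G \<Longrightarrow> x \<in> Xd (sinv G g) \<Longrightarrow> y \<in> Xd (sinv G g) \<Longrightarrow>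
    nat_le X (th g x) (th g y) \<longleftrightarrow> nat_le X x y"
  using ordered_partial_action unfolding ordered_partial_action_def by blast

lemma th_mono:
  assumes "g \<in> arr G" "y \<in> Xd (sinv G g)" "nat_le X x y"
  shows "nat_le X (th g x) (th g y)"
  using th_nat_le_iff Xd_downward_closed assms by (metis G.sinv_simps(1))

lemma th_smul_arr:
  assumes "g \<in> arr G" "h \<in> arr G" "sdom G g = scod G h"
    and "x \<in> Xd (sinv G h)" "th h x \<in> Xd (sinv G g)"
  shows "x \<in> Xd (sinv G (smul G g h))" "th (smul G g h) x = th g (th h x)"
  using partial_action assms unfolding partial_action_def composable_def by blast+

lemma th_smul:
  assumes "g \<in> arr G" "x \<in> Xd (sinv G g)" "y \<in> Xd (sinv G g)" "sdom X x = sdom X y"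
  shows "sdom X (th g x) = sdom X (th g y)" "th g (smul X x y) = smul X (th g x) (th g y)"
proof -
  have "sinv G g \<in> arr G"
    using assms(1) by simp
  moreover have "\<forall>a\<in>Xd (sinv G g). th g a \<in> Xd g" "\<forall>b\<in>Xd g. th (sinv G g) b \<in> Xd (sinv G g)"
    "\<forall>a\<in>Xd (sinv G g). th (sinv G g) (th g a) = a" "\<forall>b\<in>Xd g. th g (th (sinv G g) b) = b"
    "\<forall>a\<in>Xd (sinv G g). \<forall>a'\<in>Xd (sinv G g). nat_le X a a' \<longleftrightarrow> nat_le X (th g a) (th g a')"
    using th_in th_sinv_in th_sinv_th th_th_sinv th_nat_le_iff assms(1) by auto
  ultimately show "sdom X (th g x) = sdom X (th g y)" "th g (smul X x y) = smul X (th g x) (th g y)"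
    using X.order_iso_smul[OF Xd_order_ideal Xd_order_ideal] assms(1-4) by blast+
qed

lemma th_idem:
  assumes "idem G e" "x \<in> Xd e"
  shows "th e x = x"
proof -
  have e: "e \<in> arr G" "sdom G e = scod G e" "smul G e e = e" "sinv G e = e"
    using assms(1) G.sinv_idem unfolding idem_def by auto
  then have "th e x = th e (th e x)"
    using th_smul_arr(2)[of e e x] th_in[of e x] assms(2) by simp
  also have "\<dots> = x"
    using th_sinv_th[of e x] e assms(2) by simp
  finally show ?thesis .
qed

lemma th_sinv_smul_th_below:
  assumes "h \<in> arr G" "y \<in> Xd (sinv G h)" "nat_le X q y" "x \<in> arr X" "sdom X x = sdom X (th h y)"
  shows "th (sinv G h) (smul X x (th h q)) = smul X (th (sinv G h) (smul X x (th h y))) q"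
proof -
  have hy: "th h y \<in> Xd h" "th h y \<in> arr X"
    using th_in Xd_arr assms(1,2) by auto
  have q: "q \<in> Xd (sinv G h)" "th h q \<in> Xd h" "th h q \<in> arr X"
    using Xd_downward_closed th_in Xd_arr assms(1-3) by (auto simp: G.sinv_simps(1))
  have le: "nat_le X (th h q) (th h y)"
    using th_mono assms(1-3) by blast
  then have "smul X x (th h q) = smul X (smul X x (th h y)) (th h q)"
    using assms(4,5) hy q(3) by (simp add: X.nat_le_iff X.smul_comm[of "th h y" "th h q"])
  moreover have "smul X x (th h y) \<in> Xd (sinv G (sinv G h))"
    using Xd_downward_closed X.nat_le_smul(2) assms hy by simp
  moreover have "th h q \<in> Xd (sinv G (sinv G h))" "sdom X (smul X x (th h y)) = sdom X (th h q)"
    using q assms hy le X.nat_le_sdom by auto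
  ultimately show ?thesis
    using th_smul(2)[of "sinv G h" "smul X x (th h y)" "th h q"] th_sinv_th[OF assms(1) q(1)] assms(1)
    by simp
qed

abbreviation SD :: "('g \<times> 'x, 'go \<times> 'xo) sgd" where
  "SD \<equiv> semidirect G X Xd th"

lemma semidirect_simps [simp]:
  "(g, x) \<in> arr SD \<longleftrightarrow> g \<in> arr G \<and> x \<in> Xd (sinv G g)"
  "obj SD = obj G \<times> obj X"
  "sdom SD (g, x) = (sdom G g, sdom X x)"
  "scod SD (g, x) = (scod G g, scod X (th g x))"
  "smul SD (g, x) (h, y) = (smul G g h, th (sinv G h) (smul X x (th h y)))"
  unfolding semidirect_def by simp_all

lemma semidirect_smul_snd:
  assumes "g \<in> arr G" "h \<in> arr G" "sdom G g = scod G h"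
    and "x \<in> Xd (sinv G g)" "y \<in> Xd (sinv G h)" "sdom X x = sdom X (th h y)"
  defines "z \<equiv> smul X x (th h y)"
  shows "z \<in> Xd h" "nat_le X z x" "th h (th (sinv G h) z) = z"
    "nat_le X (th (sinv G h) z) y"
    "th (sinv G h) z \<in> Xd (sinv G (smul G g h))"
    "th (smul G g h) (th (sinv G h) z) = th g z"
proof -
  have hy: "th h y \<in> Xd h" "th h y \<in> arr X"
    using th_in Xd_arr assms(2,5) by auto
  have x: "x \<in> arr X"
    using Xd_arr[of "sinv G g" x] assms(1,4) by simp
  have zx: "nat_le X z x" and zy: "nat_le X z (th h y)"
    unfolding z_def using X.nat_le_smul x hy assms(6) by auto
  show "nat_le X z x"
    by (rule zx)
  show z: "z \<in> Xd h"
    using Xd_downward_closed zy assms(2) hy by blast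
  then show th_z: "th h (th (sinv G h) z) = z"
    using th_th_sinv assms(2) by blast
  show "nat_le X (th (sinv G h) z) y"
    using th_mono[of "sinv G h" "th h y" z] zy th_sinv_th assms(2,5) hy
    by simp
  have "z \<in> Xd (sinv G g)"
    using Xd_downward_closed zx assms(1,4) by simp
  then show "th (sinv G h) z \<in> Xd (sinv G (smul G g h))"
    "th (smul G g h) (th (sinv G h) z) = th g z"
    using th_smul_arr[of g h "th (sinv G h) z"] th_sinv_in z th_z assms(1-3) by auto
qed

lemma semidirect_composable:
  "composable SD (g, x) (h, y) \<longleftrightarrow> g \<in> arr G \<and> h \<in> arr G \<and> sdom G g = scod G h \<and>
     x \<in> Xd (sinv G g) \<and> y \<in> Xd (sinv G h) \<and> sdom X x = sdom X (th h y)"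
  using th_in Xd_arr unfolding composable_def by auto

lemma semidirect_assoc:
  assumes "composable SD (g, x) (h, y)" "composable SD (h, y) (k, u)"
  shows "smul SD (smul SD (g, x) (h, y)) (k, u) = smul SD (g, x) (smul SD (h, y) (k, u))"
proof -
  have a: "g \<in> arr G" "h \<in> arr G" "k \<in> arr G" "sdom G g = scod G h" "sdom G h = scod G k"
    "x \<in> Xd (sinv G g)" "y \<in> Xd (sinv G h)" "u \<in> Xd (sinv G k)"
    "sdom X x = sdom X (th h y)" "sdom X y = sdom X (th k u)"
    using assms by (simp_all add: semidirect_composable)
  define w where "w = th (sinv G h) (smul X x (th h y))"
  define q where "q = smul X y (th k u)"
  note gh = semidirect_smul_snd[OF a(1,2,4,6,7,9), folded w_def]
  note hk = semidirect_smul_snd[OF a(2,3,5,7,8,10), folded q_def]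
  have y: "y \<in> arr X" "th k u \<in> arr X" "w \<in> arr X"
    using Xd_arr[of "sinv G h"] Xd_arr th_in a(2,3,7,8) gh(4) X.nat_le_iff by auto
  have x: "x \<in> arr X"
    using Xd_arr[of "sinv G g"] a(1,6) by simp
  txt \<open>Both sides reduce to \<open>th (sinv G k) (smul X w q)\<close>.\<close>
  have wq: "smul X w (th k u) = smul X w q"
    using gh(4) y a(10) unfolding q_def by (simp add: X.nat_le_iff X.smul_assoc[symmetric])
  have r: "th (sinv G h) (smul X x (th h q)) = smul X w q"
    using th_sinv_smul_th_below[OF a(2,7) hk(2) x a(9)] unfolding w_def .
  have q: "q \<in> Xd (sinv G h)" "th h q \<in> Xd h"
    using Xd_downward_closed[of "sinv G h"] th_in a(2,7) hk(2) by auto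
  have "sdom X x = sdom X (th h q)"
    using a(9) X.nat_le_sdom[OF th_mono[OF a(2,7) hk(2)]] by simp
  then have "smul X x (th h q) \<in> Xd h"
    using Xd_downward_closed[OF a(2) q(2) X.nat_le_smul(2)] x Xd_arr[OF a(2) q(2)] by blast
  moreover have "sdom X w = sdom X q"
    using X.nat_le_sdom[OF gh(4)] X.nat_le_sdom[OF hk(2)] by simp
  then have "smul X w q \<in> Xd k"
    using Xd_downward_closed[OF a(3) hk(1) X.nat_le_smul(2)] y(3) Xd_arr[OF a(3) hk(1)] by blast
  ultimately have "th (sinv G (smul G h k)) (smul X x (th h q)) = th (sinv G k) (smul X w q)"
    using th_smul_arr(2)[of "sinv G k" "sinv G h"] G.sinv_smul r a(2,3,5) by simp
  then show ?thesis
    using hk(6) wq a(1-5) by (simp flip: w_def q_def)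
qed

lemma semidirect_semigroupoid: "semigroupoid SD"
  unfolding semigroupoid_def
proof (intro conjI allI impI ballI)
  fix s
  assume "s \<in> arr SD"
  then obtain g x where s: "s = (g, x)" "g \<in> arr G" "x \<in> Xd (sinv G g)"
    by (cases s) auto
  then have "x \<in> arr X" "th g x \<in> arr X"
    using Xd_arr[of "sinv G g"] Xd_arr th_in by auto
  then show "sdom SD s \<in> obj SD" "scod SD s \<in> obj SD"
    using s semigroupoid_obj[OF G.semigroupoid] semigroupoid_obj[OF X.semigroupoid] by auto
next
  fix s t
  assume st: "composable SD s t"
  obtain g x h y where s: "s = (g, x)" and t: "t = (h, y)"
    by (cases s, cases t)
  have a: "g \<in> arr G" "h \<in> arr G" "sdom G g = scod G h"
    "x \<in> Xd (sinv G g)" "y \<in> Xd (sinv G h)" "sdom X x = sdom X (th h y)"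
    using st unfolding s t semidirect_composable by simp_all
  note P = semidirect_smul_snd[OF a]
  have "nat_le X (th g (smul X x (th h y))) (th g x)"
    using th_mono a(1,4) P(2) by blast
  then have "scod X (th g (smul X x (th h y))) = scod X (th g x)"
    using X.nat_le_iff by simp
  then show "smul SD s t \<in> arr SD" "sdom SD (smul SD s t) = sdom SD t"
    "scod SD (smul SD s t) = scod SD s"
    using P(4-6) a(1-3) X.nat_le_sdom[OF P(4)] unfolding s t by simp_all
next
  fix s t u
  assume "composable SD s t \<and> composable SD t u"
  then show "smul SD (smul SD s t) u = smul SD s (smul SD t u)"
    using semidirect_assoc by (cases s, cases t, cases u) blast
qed

lemma semidirect_is_inv:
  assumes "g \<in> arr G" "x \<in> Xd (sinv G g)"
  shows "is_inv SD (g, x) (sinv G g, th g x)"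
proof -
  have "x \<in> arr X" "th g x \<in> Xd g" "th g x \<in> arr X"
    using Xd_arr[of "sinv G g"] Xd_arr th_in assms by auto
  then show ?thesis
    unfolding is_inv_def using th_sinv_th assms by simp
qed

lemma semidirect_is_inv_nat_le:
  assumes "is_inv SD (g, x) (h, y)" "g \<in> arr G" "x \<in> Xd (sinv G g)"
  shows "h = sinv G g" "nat_le X (th g x) y"
proof -
  show h: "h = sinv G g"
    using sinv_unique[OF G.inverse_semigroupoid assms(2)] assms(1) unfolding is_inv_def by auto
  define t where "t = th (sinv G g) y"
  define p where "p = smul X x t"
  have y: "y \<in> Xd g" and xgx: "smul SD (smul SD (g, x) (h, y)) (g, x) = (g, x)"
    using assms unfolding is_inv_def h by auto
  have t: "t \<in> Xd (sinv G g)" "t \<in> arr X" and x: "x \<in> arr X"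
    using th_sinv_in Xd_arr[of "sinv G g"] y assms(2,3) unfolding t_def by auto
  have xt: "sdom X x = sdom X t"
    using assms(1) t(2) unfolding is_inv_def h t_def by simp
  have p: "nat_le X p x" "nat_le X p t"
    using X.nat_le_smul[OF x t(2) xt] unfolding p_def by auto
  then have "p \<in> Xd (sinv G g)" "smul X p x = p" "sdom X p = sdom X x"
    using Xd_downward_closed[of "sinv G g"] assms(2,3) X.nat_le_iff by auto
  then have "smul X (th g p) (th g x) = th g p"
    using th_smul(2)[OF assms(2) _ assms(3)] by metis
  then have "x = p"
    using xgx th_sinv_th[OF assms(2) \<open>p \<in> Xd (sinv G g)\<close>] assms(2)
    unfolding h p_def t_def by simp
  then have "nat_le X x t"
    using p(2) by simp
  then show "nat_le X (th g x) y"
    using th_mono[OF assms(2) t(1)] th_th_sinv[OF assms(2) y] unfolding t_def by simp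
qed

lemma semidirect_inverse_semigroupoid: "inverse_semigroupoid SD"
  unfolding inverse_semigroupoid_def
proof (intro conjI ballI semidirect_semigroupoid)
  fix s
  assume "s \<in> arr SD"
  then obtain g x where s: "s = (g, x)" "g \<in> arr G" "x \<in> Xd (sinv G g)"
    by (cases s) auto
  show "\<exists>!t. is_inv SD s t"
  proof (intro ex1I)
    show "is_inv SD s (sinv G g, th g x)"
      using semidirect_is_inv s by simp
  next
    fix t
    assume inv: "is_inv SD s t"
    obtain h y where t: "t = (h, y)"
      by (cases t)
    have h: "h = sinv G g" and le: "nat_le X (th g x) y"
      using semidirect_is_inv_nat_le inv s unfolding t by blast+
    have "is_inv SD (sinv G g, y) (g, x)"
      using is_inv_sym[of SD "(g, x)"] inv s unfolding t h by simp
    moreover have "y \<in> Xd (sinv G (sinv G g))"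
      using inv s unfolding t h is_inv_def by simp
    ultimately have "nat_le X (th (sinv G g) y) x"
      using semidirect_is_inv_nat_le(2)[of "sinv G g" y] s(2) by simp
    then have "nat_le X (th g (th (sinv G g) y)) (th g x)"
      by (rule th_mono[OF s(2,3)])
    then have "nat_le X y (th g x)"
      using th_th_sinv \<open>y \<in> Xd (sinv G (sinv G g))\<close> s(2) by simp
    then show "t = (sinv G g, th g x)"
      using X.nat_le_antisym le unfolding t h by blast
  qed
qed

lemma semidirect_idem_iff:
  assumes "(g, x) \<in> arr SD"
  shows "idem SD (g, x) \<longleftrightarrow> idem G g"
proof
  assume "idem SD (g, x)"
  then show "idem G g"
    unfolding idem_def by simp
next
  assume g: "idem G g"
  then have "sinv G g = g" "x \<in> Xd g" "x \<in> arr X"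
    using G.sinv_idem assms Xd_arr[of g] unfolding idem_def by auto
  then show "idem SD (g, x)"
    using g th_idem[OF g] unfolding idem_def by simp
qed

lemma semidirect_nat_le_fst:
  assumes "nat_le SD r s"
  shows "fst r = fst s"
proof -
  obtain e where e: "idem SD e" "composable SD s e" "r = smul SD s e"
    using assms unfolding nat_le_def by blast
  obtain g x k u where s: "s = (g, x)" and ek: "e = (k, u)"
    by (cases s, cases e)
  have "idem G k"
    using e(1) semidirect_idem_iff unfolding ek idem_def by auto
  then show ?thesis
    using G.smul_idem_right e(2,3) unfolding s ek semidirect_composable idem_def by simp
qed

lemma semidirect_E_unitary: "E_unitary SD"
  unfolding E_unitary_def
proof (intro allI impI)
  fix s e
  assume a: "s \<in> arr SD \<and> idem SD e \<and> sigma_rel SD s e"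
  then have "fst s = fst e"
    using semidirect_nat_le_fst unfolding sigma_rel_def by metis
  moreover have "idem G (fst e)"
    using a semidirect_idem_iff unfolding idem_def by (cases e) auto
  ultimately show "idem SD s"
    using a semidirect_idem_iff by (cases s) auto
qed

end

theorem mainTheorem11:
  assumes "groupoid G"
    and "semilatticeoid X"
    and "ordered_partial_action G X Xd th"
  shows "inverse_semigroupoid (semidirect G X Xd th) \<and> E_unitary (semidirect G X Xd th)"
proof -
  interpret ordered_action G X Xd th
    using assms by unfold_locales
  show ?thesis
    using semidirect_inverse_semigroupoid semidirect_E_unitary by blast
qed

end
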